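(* Let $g(x,\omega)=c_1\chi\omega(1-\omega)(\bar r\,\bar\tau(x))^2+c_2(1-\omega)\bar r\,\bar\tau(x)+\bar r\alpha$, and define $R_\tau(\omega,x)=(1-2\omega)\bar r\,\bar\tau(x)$, $R_c=\dfrac{c_2}{c_1\chi}$, $\omega_i=\dfrac12-\dfrac{c_2(\tau_D-\tau_C)}{2c_1\lambda_0\tau_i\chi}$ for $i\in\{C,D\}$, and $\tilde x(\omega)=\dfrac{\tau_D}{\tau_D-\tau_C}-\dfrac{c_2}{c_1\lambda_0\chi(1-2\omega)}$. Then: (a) if $R_\tau(0,0)<R_c$, then $\partial g/\partial\omega<0$ for all $x\in(0,1)$ and all $\omega\in(0,1)$; (b) if $R_\tau(0,1)<R_c<R_\tau(0,0)$, then (1) for $\omega\in(0,\omega_D)$: $\partial g/\partial\omega>0$ for $x\in(0,\tilde x(\omega))$ and $\partial g/\partial\omega<0$ for $x\in(\tilde x(\omega),1)$; (2) for $\omega\in(\omega_D,1)$: $\partial g/\partial\omega<0$ for all $x\in(0,1)$; (c) if $R_\tau(0,1)>R_c$, then (1) for $\omega\in(0,\omega_C)$: $\partial g/\partial\omega>0$ for all $x\in(0,1)$; (2) for $\omega\in(\omega_C,\omega_D)$: $\partial g/\partial\omega>0$ for $x\in(0,\tilde x(\omega))$ and $\partial g/\partial\omega<0$ for $x\in(\tilde x(\omega),1)$; (3) for $\omega\in(\omega_D,1)$: $\partial g/\partial\omega<0$ for all $x\in(0,1)$.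
   Context: Parameters: $\lambda_0>0$, $\tau_D>\tau_C\ge 0$, $\alpha\in[0,1]$, $\sigma\in[0,1)$, $\gamma\in[0,1)$, $d>0$, $c_1>0$, $c_2\ge 0$. $\bar\tau(x)=\tau_Cx+\tau_D(1-x)$, $\bar r=\lambda_0/(\tau_D-\tau_C)$, $\chi=(d/(1-\sigma))^{1/(1-\gamma)}$. *)

theory Defs
  imports "HOL-Analysis.Analysis"
begin

definition tau_bar :: "real \<Rightarrow> real \<Rightarrow> real \<Rightarrow> real" where
  "tau_bar tC tD x = tC * x + tD * (1 - x)"

definition r_bar :: "real \<Rightarrow> real \<Rightarrow> real \<Rightarrow> real" where
  "r_bar l0 tC tD = l0 / (tD - tC)"

definition chi :: "real \<Rightarrow> real \<Rightarrow> real \<Rightarrow> real" where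
  "chi d sig gam = (d / (1 - sig)) powr (1 / (1 - gam))"

definition gfun :: "real \<Rightarrow> real \<Rightarrow> real \<Rightarrow> real \<Rightarrow> real \<Rightarrow> real \<Rightarrow> real \<Rightarrow> real \<Rightarrow> real \<Rightarrow> real" where
  "gfun l0 tC tD al c1 c2 ch x w =
     c1 * ch * w * (1 - w) * (r_bar l0 tC tD * tau_bar tC tD x)^2
     + c2 * (1 - w) * r_bar l0 tC tD * tau_bar tC tD x + r_bar l0 tC tD * al"

definition R_tau :: "real \<Rightarrow> real \<Rightarrow> real \<Rightarrow> real \<Rightarrow> real \<Rightarrow> real" where
  "R_tau l0 tC tD w x = (1 - 2 * w) * r_bar l0 tC tD * tau_bar tC tD x"

definition R_c :: "real \<Rightarrow> real \<Rightarrow> real \<Rightarrow> real" where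
  "R_c c1 c2 ch = c2 / (c1 * ch)"

definition omega_i :: "real \<Rightarrow> real \<Rightarrow> real \<Rightarrow> real \<Rightarrow> real \<Rightarrow> real \<Rightarrow> real \<Rightarrow> real" where
  "omega_i l0 tC tD c1 c2 ch ti = 1/2 - c2 * (tD - tC) / (2 * c1 * l0 * ti * ch)"

definition x_tilde :: "real \<Rightarrow> real \<Rightarrow> real \<Rightarrow> real \<Rightarrow> real \<Rightarrow> real \<Rightarrow> real \<Rightarrow> real" where
  "x_tilde l0 tC tD c1 c2 ch w = tD / (tD - tC) - c2 / (c1 * l0 * ch * (1 - 2 * w))"

end

theory Submission
  imports Defs
begin

text \<open>
  With K = r_bar * tau_bar(x) one has R_tau(w, x) = (1 - 2w) K and
  dg/dw = c1 chi K (R_tau(w, x) - R_c), so for K > 0 the derivative has the sign of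
  R_tau(w, x) - R_c. For fixed x this changes sign exactly at omega_i evaluated at
  tau_i = tau_bar(x); since omega_i is increasing in tau_i and tau_bar(x) lies between
  tau_C and tau_D, the derivative is negative for w > omega_D and positive for w < omega_C.
  For fixed w < 1/2, R_tau(w, x) is affine and decreasing in x and crosses R_c at x_tilde(w).
  Of the case hypotheses only R_tau(0, 0) < R_c (forcing omega_D < 0) and
  R_c < R_tau(0, 1) (forcing tau_C > 0) are needed.
\<close>

lemma chi_pos: "d > 0 \<Longrightarrow> sig < 1 \<Longrightarrow> 0 < chi d sig gam"
  by (simp add: chi_def)

lemma tau_bar_between:
  assumes "tC < tD" "x \<in> {0<..<1}"
  shows "tC < tau_bar tC tD x" "tau_bar tC tD x < tD"
proof -
  have "tau_bar tC tD x = tC + (tD - tC) * (1 - x)"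
    by (simp add: tau_bar_def algebra_simps)
  then show "tC < tau_bar tC tD x"
    using assms by simp
  have "tau_bar tC tD x = tD - (tD - tC) * x"
    by (simp add: tau_bar_def algebra_simps)
  then show "tau_bar tC tD x < tD"
    using assms by simp
qed

lemma R_tau_0_pos:
  assumes "0 < l0" "0 \<le> tC" "tC < tD" "x < 1"
  shows "0 < R_tau l0 tC tD 0 x"
proof -
  have "tau_bar tC tD x = tC + (tD - tC) * (1 - x)"
    by (simp add: tau_bar_def algebra_simps)
  then have "0 < tau_bar tC tD x"
    using assms by (simp add: add_nonneg_pos)
  then show ?thesis
    using assms by (simp add: R_tau_def r_bar_def)
qed

lemma deriv_gfun:
  assumes "c1 * ch \<noteq> 0"
  shows "deriv (\<lambda>v. gfun l0 tC tD al c1 c2 ch x v) w =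
    c1 * ch * R_tau l0 tC tD 0 x * (R_tau l0 tC tD w x - R_c c1 c2 ch)"
proof -
  define K where "K = r_bar l0 tC tD * tau_bar tC tD x"
  have "(\<lambda>v. gfun l0 tC tD al c1 c2 ch x v) =
      (\<lambda>v. c1 * ch * K\<^sup>2 * (v - v * v) + c2 * K * (1 - v) + r_bar l0 tC tD * al)"
    by (rule ext) (simp add: gfun_def K_def power_mult_distrib algebra_simps)
  moreover have "((\<lambda>v. c1 * ch * K\<^sup>2 * (v - v * v) + c2 * K * (1 - v) + r_bar l0 tC tD * al)
      has_real_derivative c1 * ch * K\<^sup>2 * (1 - (1 * w + w * 1)) + c2 * K * (0 - 1) + 0) (at w)"
    by (intro derivative_eq_intros) auto
  ultimately have "deriv (\<lambda>v. gfun l0 tC tD al c1 c2 ch x v) w =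
      c1 * ch * K * ((1 - 2 * w) * K) - c2 * K"
    by (simp add: DERIV_imp_deriv power2_eq_square algebra_simps)
  also have "\<dots> = c1 * ch * K * ((1 - 2 * w) * K - R_c c1 c2 ch)"
    using assms by (simp add: R_c_def field_simps)
  finally show ?thesis
    by (simp add: K_def R_tau_def mult.assoc)
qed

lemma deriv_gfun_neg:
  assumes "0 < c1" "0 < ch" "0 < R_tau l0 tC tD 0 x" "R_tau l0 tC tD w x < R_c c1 c2 ch"
  shows "deriv (\<lambda>v. gfun l0 tC tD al c1 c2 ch x v) w < 0"
proof -
  have nz: "c1 * ch \<noteq> 0"
    using assms by simp
  have "c1 * ch * R_tau l0 tC tD 0 x * (R_tau l0 tC tD w x - R_c c1 c2 ch) < 0"
    using assms by (intro mult_pos_neg mult_pos_pos) simp_all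
  then show ?thesis
    by (simp only: deriv_gfun[OF nz])
qed

text \<open>Here K > 0 need not be assumed: it follows from 0 \<le> R_c < (1 - 2w) K.\<close>

lemma deriv_gfun_pos:
  assumes "0 < c1" "0 < ch" "0 \<le> R_c c1 c2 ch" "w < 1/2" "R_c c1 c2 ch < R_tau l0 tC tD w x"
  shows "0 < deriv (\<lambda>v. gfun l0 tC tD al c1 c2 ch x v) w"
proof -
  have "0 < (1 - 2 * w) * R_tau l0 tC tD 0 x"
    using assms by (simp add: R_tau_def)
  then have "0 < R_tau l0 tC tD 0 x"
    using assms(4) by (simp add: zero_less_mult_iff)
  then have "0 < c1 * ch * R_tau l0 tC tD 0 x * (R_tau l0 tC tD w x - R_c c1 c2 ch)"
    using assms by (intro mult_pos_pos) simp_all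
  moreover have nz: "c1 * ch \<noteq> 0"
    using assms by simp
  ultimately show ?thesis
    by (simp only: deriv_gfun[OF nz])
qed

lemma omega_i_eq:
  assumes "0 < l0" "tC < tD" "ti \<noteq> 0" "c1 * ch \<noteq> 0"
  shows "2 * omega_i l0 tC tD c1 c2 ch ti = 1 - R_c c1 c2 ch / (r_bar l0 tC tD * ti)"
  using assms by (simp add: omega_i_def R_c_def r_bar_def field_simps)

lemma R_tau_omega_i_iff:
  assumes "0 < l0" "tC < tD" "0 < tau_bar tC tD x" "c1 * ch \<noteq> 0"
  shows "R_c c1 c2 ch < R_tau l0 tC tD w x \<longleftrightarrow> w < omega_i l0 tC tD c1 c2 ch (tau_bar tC tD x)"
    and "R_tau l0 tC tD w x < R_c c1 c2 ch \<longleftrightarrow> omega_i l0 tC tD c1 c2 ch (tau_bar tC tD x) < w"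
proof -
  define K where "K = r_bar l0 tC tD * tau_bar tC tD x"
  have K: "0 < K"
    using assms by (simp add: K_def r_bar_def)
  have R: "R_tau l0 tC tD w x = (1 - 2 * w) * K"
    by (simp add: K_def R_tau_def)
  have "2 * omega_i l0 tC tD c1 c2 ch (tau_bar tC tD x) = 1 - R_c c1 c2 ch / K"
    using assms by (simp add: K_def omega_i_eq)
  then have "w < omega_i l0 tC tD c1 c2 ch (tau_bar tC tD x) \<longleftrightarrow> R_c c1 c2 ch / K < 1 - 2 * w"
    and "omega_i l0 tC tD c1 c2 ch (tau_bar tC tD x) < w \<longleftrightarrow> 1 - 2 * w < R_c c1 c2 ch / K"
    by linarith+
  then show "R_c c1 c2 ch < R_tau l0 tC tD w x \<longleftrightarrow> w < omega_i l0 tC tD c1 c2 ch (tau_bar tC tD x)"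
    and "R_tau l0 tC tD w x < R_c c1 c2 ch \<longleftrightarrow> omega_i l0 tC tD c1 c2 ch (tau_bar tC tD x) < w"
    unfolding R using K by (simp_all add: pos_divide_less_eq pos_less_divide_eq)
qed

lemma omega_i_le_half:
  assumes "0 < l0" "tC < tD" "0 < ti" "c1 * ch \<noteq> 0" "0 \<le> R_c c1 c2 ch"
  shows "omega_i l0 tC tD c1 c2 ch ti \<le> 1/2"
proof -
  have "0 \<le> R_c c1 c2 ch / (r_bar l0 tC tD * ti)"
    using assms by (simp add: r_bar_def)
  moreover have "2 * omega_i l0 tC tD c1 c2 ch ti = 1 - R_c c1 c2 ch / (r_bar l0 tC tD * ti)"
    using assms by (simp add: omega_i_eq)
  ultimately show ?thesis
    by linarith
qed

lemma omega_i_mono: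
  assumes "0 < l0" "tC < tD" "0 < s" "s \<le> t" "c1 * ch \<noteq> 0" "0 \<le> R_c c1 c2 ch"
  shows "omega_i l0 tC tD c1 c2 ch s \<le> omega_i l0 tC tD c1 c2 ch t"
proof -
  have r: "0 < r_bar l0 tC tD"
    using assms by (simp add: r_bar_def)
  have "R_c c1 c2 ch / (r_bar l0 tC tD * t) \<le> R_c c1 c2 ch / (r_bar l0 tC tD * s)"
    using assms r by (intro divide_left_mono) simp_all
  moreover have "2 * omega_i l0 tC tD c1 c2 ch s = 1 - R_c c1 c2 ch / (r_bar l0 tC tD * s)"
    and "2 * omega_i l0 tC tD c1 c2 ch t = 1 - R_c c1 c2 ch / (r_bar l0 tC tD * t)"
    using assms by (simp_all add: omega_i_eq)
  ultimately show ?thesis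
    by linarith
qed

lemma R_tau_x_tilde_iff:
  assumes "0 < l0" "tC < tD" "w < 1/2" "c1 * ch \<noteq> 0"
  shows "R_c c1 c2 ch < R_tau l0 tC tD w x \<longleftrightarrow> x < x_tilde l0 tC tD c1 c2 ch w"
    and "R_tau l0 tC tD w x < R_c c1 c2 ch \<longleftrightarrow> x_tilde l0 tC tD c1 c2 ch w < x"
proof -
  define a where "a = (1 - 2 * w) * l0"
  define b where "b = tD / (tD - tC)"
  have a: "0 < a"
    using assms by (simp add: a_def)
  have R: "R_tau l0 tC tD w x = (b - x) * a"
    using assms by (simp add: a_def b_def R_tau_def r_bar_def tau_bar_def field_simps)
  have X: "x_tilde l0 tC tD c1 c2 ch w = b - R_c c1 c2 ch / a"
    by (simp add: a_def b_def x_tilde_def R_c_def mult_ac)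
  have "x < b - R_c c1 c2 ch / a \<longleftrightarrow> R_c c1 c2 ch / a < b - x"
    and "b - R_c c1 c2 ch / a < x \<longleftrightarrow> b - x < R_c c1 c2 ch / a"
    by linarith+
  then show "R_c c1 c2 ch < R_tau l0 tC tD w x \<longleftrightarrow> x < x_tilde l0 tC tD c1 c2 ch w"
    and "R_tau l0 tC tD w x < R_c c1 c2 ch \<longleftrightarrow> x_tilde l0 tC tD c1 c2 ch w < x"
    unfolding R X using a by (simp_all add: pos_divide_less_eq pos_less_divide_eq)
qed

lemma deriv_gfun_neg_above_omega_D:
  assumes "0 < l0" "0 \<le> tC" "tC < tD" "0 < c1" "0 < ch" "0 \<le> R_c c1 c2 ch"
    and "x \<in> {0<..<1}" "omega_i l0 tC tD c1 c2 ch tD < w"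
  shows "deriv (\<lambda>v. gfun l0 tC tD al c1 c2 ch x v) w < 0"
proof (rule deriv_gfun_neg)
  have tau: "0 < tau_bar tC tD x" "tau_bar tC tD x \<le> tD"
    using assms tau_bar_between[of tC tD x] by simp_all
  then have "omega_i l0 tC tD c1 c2 ch (tau_bar tC tD x) \<le> omega_i l0 tC tD c1 c2 ch tD"
    using assms by (intro omega_i_mono) simp_all
  then show "R_tau l0 tC tD w x < R_c c1 c2 ch"
    using assms tau by (subst R_tau_omega_i_iff(2)) simp_all
  show "0 < R_tau l0 tC tD 0 x"
    using assms by (intro R_tau_0_pos) simp_all
qed (use assms in simp_all)

lemma deriv_gfun_pos_below_omega_C:
  assumes "0 < l0" "0 < tC" "tC < tD" "0 < c1" "0 < ch" "0 \<le> R_c c1 c2 ch"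
    and "x \<in> {0<..<1}" "w < omega_i l0 tC tD c1 c2 ch tC"
  shows "0 < deriv (\<lambda>v. gfun l0 tC tD al c1 c2 ch x v) w"
proof (rule deriv_gfun_pos)
  have tau: "0 < tau_bar tC tD x" "tC \<le> tau_bar tC tD x"
    using assms tau_bar_between[of tC tD x] by simp_all
  then have "omega_i l0 tC tD c1 c2 ch tC \<le> omega_i l0 tC tD c1 c2 ch (tau_bar tC tD x)"
    using assms by (intro omega_i_mono) simp_all
  then show "R_c c1 c2 ch < R_tau l0 tC tD w x"
    using assms tau by (subst R_tau_omega_i_iff(1)) simp_all
  have "omega_i l0 tC tD c1 c2 ch tC \<le> 1/2"
    using assms by (intro omega_i_le_half) simp_all
  then show "w < 1/2"
    using assms by simp
qed (use assms in simp_all)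

lemma deriv_gfun_sign_x_tilde:
  assumes "0 < l0" "0 \<le> tC" "tC < tD" "0 < c1" "0 < ch" "0 \<le> R_c c1 c2 ch" "w < 1/2"
  shows "x < x_tilde l0 tC tD c1 c2 ch w \<Longrightarrow> 0 < deriv (\<lambda>v. gfun l0 tC tD al c1 c2 ch x v) w"
    and "x_tilde l0 tC tD c1 c2 ch w < x \<Longrightarrow> x < 1 \<Longrightarrow> deriv (\<lambda>v. gfun l0 tC tD al c1 c2 ch x v) w < 0"
proof -
  have nz: "c1 * ch \<noteq> 0"
    using assms by simp
  show "0 < deriv (\<lambda>v. gfun l0 tC tD al c1 c2 ch x v) w" if "x < x_tilde l0 tC tD c1 c2 ch w"
    using assms that by (intro deriv_gfun_pos) (simp_all add: R_tau_x_tilde_iff(1)[OF _ _ _ nz])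
  show "deriv (\<lambda>v. gfun l0 tC tD al c1 c2 ch x v) w < 0" if "x_tilde l0 tC tD c1 c2 ch w < x" "x < 1"
    using assms that
    by (intro deriv_gfun_neg R_tau_0_pos) (simp_all add: R_tau_x_tilde_iff(2)[OF _ _ _ nz])
qed

theorem proposition4:
  fixes l0 tC tD al sig gam d c1 c2 :: real
  assumes "l0 > 0" and "tD > tC" and "tC \<ge> 0"
    and "0 \<le> al" and "al \<le> 1"
    and "0 \<le> sig" and "sig < 1"
    and "0 \<le> gam" and "gam < 1"
    and "d > 0" and "c1 > 0" and "c2 \<ge> 0"
  defines "ch \<equiv> chi d sig gam"
  defines "g \<equiv> gfun l0 tC tD al c1 c2 ch"
  defines "Rc \<equiv> R_c c1 c2 ch"
  defines "wC \<equiv> omega_i l0 tC tD c1 c2 ch tC"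
  defines "wD \<equiv> omega_i l0 tC tD c1 c2 ch tD"
  defines "xt \<equiv> x_tilde l0 tC tD c1 c2 ch"
  shows
   "(R_tau l0 tC tD 0 0 < Rc \<longrightarrow>
       (\<forall>x\<in>{0<..<1}. \<forall>w\<in>{0<..<1}. deriv (\<lambda>v. g x v) w < 0))
    \<and>
    (R_tau l0 tC tD 0 1 < Rc \<and> Rc < R_tau l0 tC tD 0 0 \<longrightarrow>
       (\<forall>w\<in>{0<..<wD}.
          (\<forall>x\<in>{0<..<xt w}. deriv (\<lambda>v. g x v) w > 0) \<and>
          (\<forall>x\<in>{xt w<..<1}. deriv (\<lambda>v. g x v) w < 0)) \<and>
       (\<forall>w\<in>{wD<..<1}. \<forall>x\<in>{0<..<1}. deriv (\<lambda>v. g x v) w < 0))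
    \<and>
    (R_tau l0 tC tD 0 1 > Rc \<longrightarrow>
       (\<forall>w\<in>{0<..<wC}. \<forall>x\<in>{0<..<1}. deriv (\<lambda>v. g x v) w > 0) \<and>
       (\<forall>w\<in>{wC<..<wD}.
          (\<forall>x\<in>{0<..<xt w}. deriv (\<lambda>v. g x v) w > 0) \<and>
          (\<forall>x\<in>{xt w<..<1}. deriv (\<lambda>v. g x v) w < 0)) \<and>
       (\<forall>w\<in>{wD<..<1}. \<forall>x\<in>{0<..<1}. deriv (\<lambda>v. g x v) w < 0))"
proof -
  have ch: "0 < ch"
    using assms by (simp add: ch_def chi_pos)
  have Rc: "0 \<le> Rc"
    using assms ch by (simp add: Rc_def R_c_def)
  note hyps = assms(1,3,2,11) ch Rc[unfolded Rc_def]
  have wD_half: "w < 1/2" if "w < wD" for w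
    using that omega_i_le_half[of l0 tC tD tD c1 ch c2] hyps by (simp add: wD_def)
  have wD_neg: "wD < 0" if "R_tau l0 tC tD 0 0 < Rc"
    using that hyps R_tau_omega_i_iff(2)[of l0 tC tD 0 c1 ch 0 c2]
    by (simp add: wD_def Rc_def tau_bar_def)
  have tC_pos: "0 < tC" if "Rc < R_tau l0 tC tD 0 1"
  proof -
    have "0 < l0 * tC / (tD - tC)"
      using that Rc by (simp add: R_tau_def r_bar_def tau_bar_def)
    then show ?thesis
      using assms(1,2) by (simp add: zero_less_divide_iff zero_less_mult_iff)
  qed
  have above: "deriv (\<lambda>v. g x v) w < 0" if "x \<in> {0<..<1}" "wD < w" for x w
    using that hyps unfolding g_def wD_def Rc_def by (intro deriv_gfun_neg_above_omega_D) simp_all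
  have below: "0 < deriv (\<lambda>v. g x v) w" if "0 < tC" "x \<in> {0<..<1}" "w < wC" for x w
    using that hyps unfolding g_def wC_def Rc_def by (intro deriv_gfun_pos_below_omega_C) simp_all
  have split: "(\<forall>x\<in>{0<..<xt w}. deriv (\<lambda>v. g x v) w > 0) \<and>
      (\<forall>x\<in>{xt w<..<1}. deriv (\<lambda>v. g x v) w < 0)" if "w < wD" for w
    using hyps wD_half[OF that] deriv_gfun_sign_x_tilde[of l0 tC tD c1 ch c2 w]
    unfolding g_def xt_def Rc_def by auto
  show ?thesis
    using above below split wD_neg tC_pos by auto
qed

end
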